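(* Let $\mathcal{A}=\{a_1,a_2,\ldots\}$ be a countably infinite set. Let $X$ be a discrete random variable taking values in $\{a_1,\ldots,a_m\}$ for some $m\in\mathbb{N}$, and let $Y$ be a discrete random variable taking values in $\mathcal{A}$. Assume that for some $\eta_1,\eta_2,\eta_3>0$ with $\eta_3\le\eta_2\le\eta_1<1$, $$\eta_2\le d_{\mathrm{TV}}(X,Y)\le\eta_1,\qquad d_{\mathrm{loc}}(X,Y)\le\eta_3.$$ Let $M$ be an integer such that $$\sum_{i=M}^\infty P_Y(a_i)\le\eta_3,\qquad M\ge\max\Bigl\{m+1,\ \frac{\eta_2}{(1-\eta_1)\eta_3}\Bigr\},$$ and let $\eta_4>0$ satisfy $-\sum_{i=M}^\infty P_Y(a_i)\log P_Y(a_i)\le\eta_4$. Then $$|H(X)-H(Y)|\le\eta_1\log\Bigl(\frac{M\eta_3}{\eta_2}-1\Bigr)+h(\eta_1)+\eta_4.$$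
   Context: For discrete random variables $X,Y$ on a set $\mathcal{A}$ with probability mass functions $P_X,P_Y$, the local distance is $d_{\mathrm{loc}}(X,Y) = \sup_{u\in\mathcal{A}} |P_X(u)-P_Y(u)|$ and the total variation distance is $d_{\mathrm{TV}}(X,Y) = \frac12\sum_{u\in\mathcal{A}}|P_X(u)-P_Y(u)|$. All logarithms are natural and entropies are in nats, with $0\log0=0$. $h(x) = -x\log x-(1-x)\log(1-x)$ denotes the binary entropy function. *)

theory Defs
  imports "HOL-Probability.Probability"
begin

text \<open>The countably infinite alphabet a_1, a_2, ... is represented by its index set
  {1..} of natural numbers; random variables are represented by their distributions
  (probability mass functions).\<close>

definition shannon_entropy :: "'a pmf \<Rightarrow> real" where
  "shannon_entropy p = (\<Sum>\<^sub>\<infinity>x. - pmf p x * ln (pmf p x))"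

definition d_TV :: "'a pmf \<Rightarrow> 'a pmf \<Rightarrow> real" where
  "d_TV p q = (1/2) * (\<Sum>\<^sub>\<infinity>x. \<bar>pmf p x - pmf q x\<bar>)"

definition d_loc :: "'a pmf \<Rightarrow> 'a pmf \<Rightarrow> real" where
  "d_loc p q = (SUP x. \<bar>pmf p x - pmf q x\<bar>)"

definition bin_entropy :: "real \<Rightarrow> real" where
  "bin_entropy x = - x * ln x - (1 - x) * ln (1 - x)"

end

theory Submission imports Defs begin

(* Write ent x = -x ln x.  Cut the alphabet at M: X lives on F = {1..<M}, and Y puts
   mass T <= eta3 and entropy E <= eta4 on the tail {M..}.  On F decompose
   p = c + z and q = c + w with c = min p q, so that sum z = delta, sum w = delta - T
   and sum c = 1 - delta for delta = d_TV X Y.  Subadditivity of ent and a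
   two-point lower bound for ent (a + b) reduce H(X) - H(Y) and H(Y) - H(X) to
   sum ent z - sum ent w plus the binary entropy h(delta).  Since z, w <= eta3 pointwise
   and z, w live on disjoint subsets of F of sizes s and n with s + n <= M - 1, the
   maximum-entropy bound on s resp. n + 1 points gives both directions at most
   delta ln (M eta3 / delta - 1) + h(delta) (+ E for one of them).  Finally
   delta |-> delta ln K + h(delta) is nondecreasing up to eta1, by the hypothesis on M. *)

definition ent :: "real \<Rightarrow> real" where
  "ent x = - x * ln x"

lemma ent_zero [simp]: "ent 0 = 0"
  by (simp add: ent_def)

lemma bin_entropy_ent: "bin_entropy x = ent x + ent (1 - x)"
  by (simp add: bin_entropy_def ent_def algebra_simps)

(* The tangent-line bound: ln is concave, so -a ln a <= t - a - a ln t for every t > 0. *)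
lemma ent_le_tangent:
  assumes "0 \<le> a" "0 < t"
  shows "ent a \<le> t - a - a * ln t"
proof (cases "a = 0")
  case False
  hence a: "0 < a" using assms by simp
  have "ln (t / a) \<le> t / a - 1" using a assms by (intro ln_le_minus_one) simp
  hence "a * (ln t - ln a) \<le> t - a" using a assms by (simp add: ln_div field_simps)
  thus ?thesis by (simp add: ent_def algebra_simps)
qed (use assms in simp)

lemma ent_nonneg:
  assumes "0 \<le> x" "x \<le> 1"
  shows "0 \<le> ent x"
  using assms by (cases "x = 0") (simp_all add: ent_def mult_nonneg_nonpos)

lemma ent_ge_small:
  assumes "0 \<le> x" "x \<le> \<eta>" "0 < \<eta>"
  shows "- x * ln \<eta> \<le> ent x"
proof (cases "x = 0")
  case False
  hence "ln x \<le> ln \<eta>" using assms by simp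
  thus ?thesis using assms by (simp add: ent_def mult_left_mono)
qed (simp add: ent_def)

lemma ent_subadditive:
  assumes "0 \<le> a" "0 \<le> b"
  shows "ent (a + b) \<le> ent a + ent b"
proof -
  have "a * ln a \<le> a * ln (a + b)" if "0 \<le> a" "0 \<le> b" for a b :: real
    using that by (cases "a = 0") (auto intro: mult_left_mono)
  from this[of a b] this[of b a] assms show ?thesis
    by (simp add: ent_def algebra_simps)
qed

lemma ent_split_lower:
  assumes "0 \<le> a" "0 \<le> b" "0 < l" "l < 1"
  shows "ent a + ent b + a * ln (1 - l) + b * ln l \<le> ent (a + b)"
proof (cases "a + b = 0")
  case True
  hence "a = 0" "b = 0" using assms by simp_all
  thus ?thesis by simp
next
  case False
  hence s: "0 < a + b" using assms by simp
  have "ent a \<le> (1 - l) * (a + b) - a - a * ln ((1 - l) * (a + b))"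
    using assms s by (intro ent_le_tangent) auto
  moreover have "ent b \<le> l * (a + b) - b - b * ln (l * (a + b))"
    using assms s by (intro ent_le_tangent) auto
  moreover have "ln ((1 - l) * (a + b)) = ln (1 - l) + ln (a + b)"
    and "ln (l * (a + b)) = ln l + ln (a + b)"
    using assms s by (simp_all add: ln_mult)
  ultimately show ?thesis by (simp add: ent_def algebra_simps)
qed

lemma sum_ent_mix:
  assumes "\<And>i. 0 \<le> c i" "\<And>i. 0 \<le> u i" "\<And>i. 0 \<le> v i" "0 < l" "l < 1"
  shows "(\<Sum>i\<in>F. ent (c i + u i)) - (\<Sum>i\<in>F. ent (c i + v i))
           \<le> (\<Sum>i\<in>F. ent (u i)) - (\<Sum>i\<in>F. ent (v i)) - sum c F * ln (1 - l) - sum v F * ln l"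
proof -
  have "(\<Sum>i\<in>F. ent (c i + u i) - ent (c i + v i))
          \<le> (\<Sum>i\<in>F. ent (u i) - ent (v i) - c i * ln (1 - l) - v i * ln l)"
  proof (rule sum_mono)
    fix i
    have "ent (c i + u i) \<le> ent (c i) + ent (u i)"
      using assms by (intro ent_subadditive) auto
    moreover have "ent (c i) + ent (v i) + c i * ln (1 - l) + v i * ln l \<le> ent (c i + v i)"
      using assms by (intro ent_split_lower) auto
    ultimately show "ent (c i + u i) - ent (c i + v i)
                       \<le> ent (u i) - ent (v i) - c i * ln (1 - l) - v i * ln l" by linarith
  qed
  thus ?thesis by (simp add: sum_subtractf sum_distrib_right)
qed

lemma sum_ent_le_card:
  assumes "finite S" "\<And>i. i \<in> S \<Longrightarrow> 0 \<le> a i" "0 < sum a S"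
  shows "(\<Sum>i\<in>S. ent (a i)) \<le> sum a S * ln (card S / sum a S)"
proof -
  define \<sigma> where "\<sigma> = sum a S"
  define n where "n = real (card S)"
  have "S \<noteq> {}" using assms(3) by auto
  hence n: "0 < n" using assms(1) by (simp add: n_def card_gt_0_iff)
  have \<sigma>: "0 < \<sigma>" using assms(3) by (simp add: \<sigma>_def)
  have "(\<Sum>i\<in>S. ent (a i)) \<le> (\<Sum>i\<in>S. \<sigma> / n - a i - a i * ln (\<sigma> / n))"
    using assms(2) \<sigma> n by (intro sum_mono ent_le_tangent) auto
  also have "\<dots> = n * (\<sigma> / n) - \<sigma> - \<sigma> * ln (\<sigma> / n)"
    by (simp add: sum_subtractf sum_distrib_right n_def \<sigma>_def)
  also have "\<dots> = \<sigma> * ln (n / \<sigma>)"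
    using n \<sigma> by (simp add: ln_div algebra_simps)
  finally show ?thesis by (simp add: \<sigma>_def n_def)
qed

lemma sum_ent_plus_point_le:
  assumes "finite S" "\<And>i. i \<in> S \<Longrightarrow> 0 \<le> a i" "0 \<le> b" "0 < sum a S + b"
  shows "(\<Sum>i\<in>S. ent (a i)) + ent b
           \<le> (sum a S + b) * ln (real (card S + 1) / (sum a S + b))"
proof -
  define S' where "S' = insert None (Some ` S)"
  define a' where "a' = case_option b a"
  have "card S' = card S + 1" "sum a' S' = sum a S + b"
       "(\<Sum>j\<in>S'. ent (a' j)) = (\<Sum>i\<in>S. ent (a i)) + ent b"
    using assms(1) by (simp_all add: S'_def a'_def card_image sum.reindex)
  moreover have "(\<Sum>j\<in>S'. ent (a' j)) \<le> sum a' S' * ln (card S' / sum a' S')"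
    using assms unfolding S'_def a'_def by (intro sum_ent_le_card) (auto simp: sum.reindex)
  ultimately show ?thesis by simp
qed

lemma sum_ent_ge_small:
  assumes "\<And>i. i \<in> S \<Longrightarrow> 0 \<le> a i \<and> a i \<le> \<eta>" "0 < \<eta>"
  shows "- sum a S * ln \<eta> \<le> (\<Sum>i\<in>S. ent (a i))"
proof -
  have "(\<Sum>i\<in>S. - a i * ln \<eta>) \<le> (\<Sum>i\<in>S. ent (a i))"
    using assms by (intro sum_mono ent_ge_small) auto
  thus ?thesis by (simp add: sum_distrib_right sum_negf)
qed

(* The bound delta ln K' + h(delta) is monotone in K' and, as long as eta <= K (1 - eta),
   i.e. below the maximiser K / (K + 1), also in delta. *)
lemma entropy_bound_mono:
  assumes "0 < \<delta>" "\<delta> \<le> \<eta>" "\<eta> < 1" "0 < K'" "K' \<le> K" "\<eta> \<le> K * (1 - \<eta>)"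
  shows "\<delta> * ln K' + bin_entropy \<delta> \<le> \<eta> * ln K + bin_entropy \<eta>"
proof -
  have "\<delta> * ln K' \<le> \<delta> * ln K"
    using assms by (intro mult_left_mono) auto
  moreover
  have "ent \<delta> \<le> \<eta> - \<delta> - \<delta> * ln \<eta>"
    using assms by (intro ent_le_tangent) auto
  moreover have "ent (1 - \<delta>) \<le> (1 - \<eta>) - (1 - \<delta>) - (1 - \<delta>) * ln (1 - \<eta>)"
    using assms by (intro ent_le_tangent) auto
  moreover have "(\<eta> - \<delta>) * ln \<eta> \<le> (\<eta> - \<delta>) * (ln K + ln (1 - \<eta>))"
  proof -
    have "ln \<eta> \<le> ln (K * (1 - \<eta>))" using assms by (subst ln_le_cancel_iff) auto
    thus ?thesis using assms by (intro mult_left_mono) (simp_all add: ln_mult)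
  qed
  ultimately show ?thesis by (simp add: bin_entropy_ent ent_def algebra_simps)
qed

(* Two nonnegative mass functions p, q on a finite set F: p has total mass 1, while q
   misses a mass T located elsewhere (the tail of Y), with total variation distance
   delta, pointwise distance at most eta on F, and T <= eta. *)
locale truncated_pmf_pair =
  fixes F :: "'a set" and p q :: "'a \<Rightarrow> real" and T \<delta> \<eta> :: real
  assumes finite_F: "finite F"
    and p_nonneg: "\<And>i. 0 \<le> p i" and q_nonneg: "\<And>i. 0 \<le> q i"
    and sum_p: "sum p F = 1" and sum_q: "sum q F + T = 1"
    and sum_dist: "(\<Sum>i\<in>F. \<bar>p i - q i\<bar>) + T = 2 * \<delta>"
    and \<delta>_pos: "0 < \<delta>" and \<delta>_less_1: "\<delta> < 1"
    and dist_le: "\<And>i. i \<in> F \<Longrightarrow> \<bar>p i - q i\<bar> \<le> \<eta>"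
    and \<eta>_pos: "0 < \<eta>" and T_nonneg: "0 \<le> T" and T_le: "T \<le> \<eta>"
begin

definition common :: "'a \<Rightarrow> real" where "common i = min (p i) (q i)"
definition exc_p :: "'a \<Rightarrow> real" where "exc_p i = p i - common i"
definition exc_q :: "'a \<Rightarrow> real" where "exc_q i = q i - common i"
definition supp_p :: "'a set" where "supp_p = {i \<in> F. q i < p i}"
definition supp_q :: "'a set" where "supp_q = {i \<in> F. p i < q i}"

lemma common_plus_exc: "common i + exc_p i = p i" "common i + exc_q i = q i"
  by (simp_all add: exc_p_def exc_q_def)

lemma exc_nonneg: "0 \<le> common i" "0 \<le> exc_p i" "0 \<le> exc_q i"
  using p_nonneg[of i] q_nonneg[of i] by (auto simp: common_def exc_p_def exc_q_def)

lemma exc_le: "i \<in> F \<Longrightarrow> exc_p i \<le> \<eta>" "i \<in> F \<Longrightarrow> exc_q i \<le> \<eta>"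
  using dist_le[of i] by (auto simp: common_def exc_p_def exc_q_def)

lemma exc_masses: "sum exc_p F = \<delta>" "sum exc_q F = \<delta> - T" "sum common F = 1 - \<delta>"
proof -
  have sum_abs: "exc_p i + exc_q i = \<bar>p i - q i\<bar>" and diff: "exc_p i - exc_q i = p i - q i" for i
    by (auto simp: common_def exc_p_def exc_q_def)
  have "sum exc_p F + sum exc_q F = 2 * \<delta> - T"
    using sum_dist by (simp add: sum_abs[symmetric] sum.distrib)
  moreover have "sum exc_p F - sum exc_q F = T"
    using sum_p sum_q by (simp add: sum_subtractf[symmetric] diff sum_subtractf)
  ultimately show p: "sum exc_p F = \<delta>" and "sum exc_q F = \<delta> - T" by linarith+
  show "sum common F = 1 - \<delta>"
    using sum_p p by (simp add: exc_p_def sum_subtractf)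
qed

lemma sum_over_supports:
  assumes "g 0 = 0"
  shows "(\<Sum>i\<in>F. g (exc_p i)) = (\<Sum>i\<in>supp_p. g (exc_p i))"
    and "(\<Sum>i\<in>F. g (exc_q i)) = (\<Sum>i\<in>supp_q. g (exc_q i))"
proof -
  have "exc_p i = 0" if "i \<notin> supp_p" "i \<in> F" for i
    using that by (auto simp: supp_p_def exc_p_def common_def)
  moreover have "exc_q i = 0" if "i \<notin> supp_q" "i \<in> F" for i
    using that by (auto simp: supp_q_def exc_q_def common_def)
  moreover have "supp_p \<subseteq> F" "supp_q \<subseteq> F"
    by (auto simp: supp_p_def supp_q_def)
  ultimately show "(\<Sum>i\<in>F. g (exc_p i)) = (\<Sum>i\<in>supp_p. g (exc_p i))"
    and "(\<Sum>i\<in>F. g (exc_q i)) = (\<Sum>i\<in>supp_q. g (exc_q i))"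
    using assms finite_F by (auto intro!: sum.mono_neutral_right)
qed

(* The two supports are disjoint subsets of F. *)
lemma card_supports: "card supp_p + card supp_q \<le> card F"
proof -
  have "card supp_p + card supp_q = card (supp_p \<union> supp_q)"
    using finite_F by (intro card_Un_disjoint[symmetric]) (auto simp: supp_p_def supp_q_def)
  also have "\<dots> \<le> card F"
    using finite_F by (intro card_mono) (auto simp: supp_p_def supp_q_def)
  finally show ?thesis .
qed

(* Since each excess is at most eta, its support must be large enough to carry it. *)
lemma tv_le_card_supports:
  "\<delta> \<le> card supp_p * \<eta>" "\<delta> \<le> (card supp_q + 1) * \<eta>"
proof -
  have "sum exc_p supp_p \<le> card supp_p * \<eta>" "sum exc_q supp_q \<le> card supp_q * \<eta>"
    using sum_bounded_above[of supp_p exc_p \<eta>] sum_bounded_above[of supp_q exc_q \<eta>] exc_le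
    by (auto simp: supp_p_def supp_q_def)
  thus "\<delta> \<le> card supp_p * \<eta>" "\<delta> \<le> (card supp_q + 1) * \<eta>"
    using exc_masses sum_over_supports[of id] T_le by (auto simp: algebra_simps)
qed

(* Entropy of the excesses: bounded below pointwise and above by maximum entropy; for q
   the tail mass T is adjoined as one extra point. *)
lemma exc_ent_bounds:
  "- \<delta> * ln \<eta> \<le> (\<Sum>i\<in>F. ent (exc_p i))"
  "(\<Sum>i\<in>F. ent (exc_p i)) \<le> \<delta> * ln (card supp_p / \<delta>)"
  "- (\<delta> - T) * ln \<eta> \<le> (\<Sum>i\<in>F. ent (exc_q i))"
  "(\<Sum>i\<in>F. ent (exc_q i)) \<le> \<delta> * ln (real (card supp_q + 1) / \<delta>)"
proof -
  have sums: "sum exc_p supp_p = \<delta>" "sum exc_q supp_q = \<delta> - T"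
    using exc_masses sum_over_supports[of id] by simp_all
  have fin: "finite supp_p" "finite supp_q"
    using finite_F by (simp_all add: supp_p_def supp_q_def)
  show "- \<delta> * ln \<eta> \<le> (\<Sum>i\<in>F. ent (exc_p i))"
       "- (\<delta> - T) * ln \<eta> \<le> (\<Sum>i\<in>F. ent (exc_q i))"
    using sum_ent_ge_small[of F exc_p \<eta>] sum_ent_ge_small[of F exc_q \<eta>]
      exc_nonneg exc_le \<eta>_pos exc_masses by auto
  show "(\<Sum>i\<in>F. ent (exc_p i)) \<le> \<delta> * ln (card supp_p / \<delta>)"
    using sum_ent_le_card[OF fin(1), of exc_p] exc_nonneg \<delta>_pos
    by (simp add: sums sum_over_supports)
  have "0 \<le> sum q F" using q_nonneg by (simp add: sum_nonneg)
  hence "T \<le> 1" using sum_q by linarith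
  hence "0 \<le> ent T" using T_nonneg by (rule ent_nonneg[rotated])
  moreover have "(\<Sum>i\<in>supp_q. ent (exc_q i)) + ent T
                   \<le> \<delta> * ln (real (card supp_q + 1) / \<delta>)"
    using sum_ent_plus_point_le[OF fin(2), of exc_q T] exc_nonneg T_nonneg \<delta>_pos
    by (simp add: sums)
  ultimately show "(\<Sum>i\<in>F. ent (exc_q i)) \<le> \<delta> * ln (real (card supp_q + 1) / \<delta>)"
    by (simp add: sum_over_supports)
qed

lemma entropy_diff_upper:
  "(\<Sum>i\<in>F. ent (q i)) - (\<Sum>i\<in>F. ent (p i))
     \<le> \<delta> * ln ((card supp_q + 1) * \<eta> / \<delta>) + bin_entropy \<delta>"
proof -
  have "(\<Sum>i\<in>F. ent (q i)) - (\<Sum>i\<in>F. ent (p i))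
          \<le> (\<Sum>i\<in>F. ent (exc_q i)) - (\<Sum>i\<in>F. ent (exc_p i)) + bin_entropy \<delta>"
    using sum_ent_mix[of common exc_q exc_p \<delta> F] exc_nonneg \<delta>_pos \<delta>_less_1
    by (simp add: common_plus_exc exc_masses bin_entropy_def)
  also have "\<dots> \<le> \<delta> * (ln (real (card supp_q + 1) / \<delta>) + ln \<eta>) + bin_entropy \<delta>"
    using exc_ent_bounds(1,4) by (simp add: algebra_simps)
  also have "\<dots> = \<delta> * ln ((card supp_q + 1) * \<eta> / \<delta>) + bin_entropy \<delta>"
    using \<delta>_pos \<eta>_pos by (simp add: ln_mult ln_div)
  finally show ?thesis .
qed

(* The direction H(X) - H(Y); here the tail entropy E must compensate the tail mass T. *)
lemma entropy_diff_lower: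
  assumes "- T * ln \<eta> \<le> E"
  shows "(\<Sum>i\<in>F. ent (p i)) - ((\<Sum>i\<in>F. ent (q i)) + E)
           \<le> \<delta> * ln (card supp_p * \<eta> / \<delta>) + bin_entropy \<delta>"
proof -
  have "T * ln \<delta> \<le> 0" using T_nonneg \<delta>_pos \<delta>_less_1 by (simp add: mult_nonneg_nonpos)
  hence "(\<Sum>i\<in>F. ent (p i)) - (\<Sum>i\<in>F. ent (q i))
          \<le> (\<Sum>i\<in>F. ent (exc_p i)) - (\<Sum>i\<in>F. ent (exc_q i)) + bin_entropy \<delta>"
    using sum_ent_mix[of common exc_p exc_q \<delta> F] exc_nonneg \<delta>_pos \<delta>_less_1
    by (simp add: common_plus_exc exc_masses bin_entropy_def algebra_simps)
  hence "(\<Sum>i\<in>F. ent (p i)) - ((\<Sum>i\<in>F. ent (q i)) + E)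
          \<le> \<delta> * (ln (card supp_p / \<delta>) + ln \<eta>) + bin_entropy \<delta>"
    using exc_ent_bounds(2,3) assms by (simp add: algebra_simps)
  also have "\<dots> = \<delta> * ln (card supp_p * \<eta> / \<delta>) + bin_entropy \<delta>"
  proof -
    have "0 < card supp_p" using tv_le_card_supports(1) \<delta>_pos by (cases "card supp_p") simp_all
    thus ?thesis using \<delta>_pos \<eta>_pos by (simp add: ln_mult ln_div)
  qed
  finally show ?thesis .
qed

definition ratio_bound :: real where
  "ratio_bound = (card F + 1) * \<eta> / \<delta> - 1"

lemma le_ratio_bound:
  assumes "a * \<eta> + \<delta> \<le> (card F + 1) * \<eta>"
  shows "a * \<eta> / \<delta> \<le> ratio_bound"
proof -
  have "(a * \<eta> + \<delta>) / \<delta> \<le> (card F + 1) * \<eta> / \<delta>"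
    using assms \<delta>_pos by (intro divide_right_mono) auto
  thus ?thesis using \<delta>_pos by (simp add: ratio_bound_def add_divide_distrib)
qed

(* Both directions with the common bound: the support of one excess leaves room for the
   other, so s + (n + 1) <= |F| + 1 together with delta <= s eta, delta <= (n + 1) eta. *)
lemma entropy_diff_bounds:
  shows "0 < ratio_bound"
    and "(\<Sum>i\<in>F. ent (q i)) - (\<Sum>i\<in>F. ent (p i)) \<le> \<delta> * ln ratio_bound + bin_entropy \<delta>"
    and "- T * ln \<eta> \<le> E \<Longrightarrow>
         (\<Sum>i\<in>F. ent (p i)) - ((\<Sum>i\<in>F. ent (q i)) + E) \<le> \<delta> * ln ratio_bound + bin_entropy \<delta>"
proof -
  let ?s = "real (card supp_p)" and ?n = "real (card supp_q + 1)"
  have cards: "?s + ?n \<le> card F + 1"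
    using card_supports by simp
  have "?s * \<eta> + ?n * \<eta> \<le> (card F + 1) * \<eta>"
    using mult_right_mono[OF cards] \<eta>_pos by (simp add: distrib_right)
  hence q_le: "?n * \<eta> / \<delta> \<le> ratio_bound" and p_le: "?s * \<eta> / \<delta> \<le> ratio_bound"
    using tv_le_card_supports by (intro le_ratio_bound; linarith)+
  have q_pos: "0 < ?n * \<eta> / \<delta>" using \<eta>_pos \<delta>_pos by simp
  have p_pos: "0 < ?s * \<eta> / \<delta>"
    using tv_le_card_supports(1) \<eta>_pos \<delta>_pos by (cases "card supp_p") simp_all
  show "0 < ratio_bound" using q_le q_pos by linarith
  have "\<delta> * ln (?n * \<eta> / \<delta>) \<le> \<delta> * ln ratio_bound"
    using q_le q_pos \<delta>_pos by (intro mult_left_mono) auto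
  thus "(\<Sum>i\<in>F. ent (q i)) - (\<Sum>i\<in>F. ent (p i)) \<le> \<delta> * ln ratio_bound + bin_entropy \<delta>"
    using entropy_diff_upper by simp
  have "\<delta> * ln (?s * \<eta> / \<delta>) \<le> \<delta> * ln ratio_bound"
    using p_le p_pos \<delta>_pos by (intro mult_left_mono) auto
  thus "- T * ln \<eta> \<le> E \<Longrightarrow>
        (\<Sum>i\<in>F. ent (p i)) - ((\<Sum>i\<in>F. ent (q i)) + E) \<le> \<delta> * ln ratio_bound + bin_entropy \<delta>"
    using entropy_diff_lower by fastforce
qed

end

lemma pmf_summable_on: "pmf p summable_on A"
proof -
  have "Infinite_Set_Sum.abs_summable_on (pmf p) A" by (rule pmf_abs_summable)
  hence "Infinite_Sum.abs_summable_on (pmf p) A" using abs_summable_equivalent by blast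
  thus ?thesis by (rule abs_summable_summable)
qed

lemma pmf_infsum_UNIV: "infsum (pmf p) UNIV = 1"
  using infsetsum_pmf_eq_1[of p UNIV] infsetsum_infsum[OF pmf_abs_summable, of p UNIV] by simp

lemma pmf_dist_le_d_loc: "\<bar>pmf X x - pmf Y x\<bar> \<le> d_loc X Y"
proof -
  have "bdd_above (range (\<lambda>x. \<bar>pmf X x - pmf Y x\<bar>))"
  proof (rule bdd_aboveI)
    fix d assume "d \<in> range (\<lambda>x. \<bar>pmf X x - pmf Y x\<bar>)"
    then obtain j where "d = \<bar>pmf X j - pmf Y j\<bar>" by auto
    thus "d \<le> 1" using pmf_le_1[of X j] pmf_le_1[of Y j] pmf_nonneg[of X j] pmf_nonneg[of Y j]
      by linarith
  qed
  thus ?thesis unfolding d_loc_def by (rule cSUP_upper[rotated]) simp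
qed

lemma infsum_nat_split:
  fixes g :: "nat \<Rightarrow> real"
  assumes "g 0 = 0" "g summable_on {M..}"
  shows "infsum g UNIV = sum g {1..<M} + infsum g {M..}"
proof -
  have "infsum g UNIV = infsum g ({1..<M} \<union> {M..})"
    using assms(1) by (intro infsum_cong_neutral) (auto simp: not_le less_Suc_eq_0_disj)
  also have "\<dots> = sum g {1..<M} + infsum g {M..}"
    using assms(2) by (subst infsum_Un_disjoint) auto
  finally show ?thesis .
qed

lemma shannon_entropy_finite_support:
  assumes "finite A" "set_pmf X \<subseteq> A"
  shows "shannon_entropy X = (\<Sum>i\<in>A. ent (pmf X i))"
proof -
  have "shannon_entropy X = infsum (\<lambda>i. ent (pmf X i)) A"
    unfolding shannon_entropy_def ent_def using assms(2)
    by (intro infsum_cong_neutral) (auto simp: set_pmf_eq)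
  thus ?thesis using assms(1) by simp
qed

lemma infsum_ent_ge_small:
  assumes "g summable_on A" "(\<lambda>i. ent (g i)) summable_on A"
    and "\<And>i. i \<in> A \<Longrightarrow> 0 \<le> g i \<and> g i \<le> \<eta>" "0 < \<eta>"
  shows "- infsum g A * ln \<eta> \<le> infsum (\<lambda>i. ent (g i)) A"
proof -
  have "infsum (\<lambda>i. g i * (- ln \<eta>)) A \<le> infsum (\<lambda>i. ent (g i)) A"
    using assms ent_ge_small[of _ \<eta>]
    by (intro infsum_mono summable_on_cmult_left) auto
  thus ?thesis unfolding infsum_cmult_left[OF assms(1)] by simp
qed

(* Tail version for pmfs: where X vanishes, Y is at most d_loc, so the tail entropy
   of Y dominates -(tail mass) ln eta. *)
lemma tail_entropy_ge:
  fixes X Y :: "'a pmf"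
  assumes "\<And>i. i \<in> A \<Longrightarrow> pmf X i = 0" "d_loc X Y \<le> \<eta>" "0 < \<eta>"
    and "(\<lambda>i. ent (pmf Y i)) summable_on A"
  shows "- infsum (pmf Y) A * ln \<eta> \<le> infsum (\<lambda>i. ent (pmf Y i)) A"
proof (rule infsum_ent_ge_small)
  show "0 \<le> pmf Y i \<and> pmf Y i \<le> \<eta>" if "i \<in> A" for i
    using pmf_dist_le_d_loc[of X i Y] assms(1,2) that by simp
qed (use assms(3,4) pmf_summable_on in auto)

lemma truncated_pmf_pair_instance:
  fixes X Y :: "nat pmf"
  assumes X_vals: "set_pmf X \<subseteq> {1..<M}" and Y_vals: "set_pmf Y \<subseteq> {1..}"
    and loc: "d_loc X Y \<le> \<eta>" and \<eta>: "0 < \<eta>" and tail: "infsum (pmf Y) {M..} \<le> \<eta>"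
    and tv: "0 < d_TV X Y" "d_TV X Y < 1"
  shows "truncated_pmf_pair {1..<M} (pmf X) (pmf Y) (infsum (pmf Y) {M..}) (d_TV X Y) \<eta>"
proof
  have zero: "pmf X 0 = 0" "pmf Y 0 = 0" using X_vals Y_vals by (auto simp: set_pmf_eq)
  have X_tail: "pmf X i = 0" if "i \<in> {M..}" for i
    using X_vals that by (auto simp: set_pmf_eq)
  show "sum (pmf X) {1..<M} = 1" using X_vals by (intro sum_pmf_eq_1) auto
  show "sum (pmf Y) {1..<M} + infsum (pmf Y) {M..} = 1"
    using infsum_nat_split[of "pmf Y" M] zero pmf_summable_on[of Y] pmf_infsum_UNIV[of Y] by simp
  have "(\<lambda>i. \<bar>pmf X i - pmf Y i\<bar>) summable_on {M..}"
    using pmf_summable_on[of Y "{M..}"] by (rule summable_on_cong[THEN iffD1, rotated]) (simp add: X_tail)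
  moreover have "infsum (\<lambda>i. \<bar>pmf X i - pmf Y i\<bar>) {M..} = infsum (pmf Y) {M..}"
    by (intro infsum_cong) (simp add: X_tail)
  ultimately show "(\<Sum>i\<in>{1..<M}. \<bar>pmf X i - pmf Y i\<bar>) + infsum (pmf Y) {M..} = 2 * d_TV X Y"
    using infsum_nat_split[of "\<lambda>i. \<bar>pmf X i - pmf Y i\<bar>" M] zero
    by (simp add: d_TV_def)
  show "\<bar>pmf X i - pmf Y i\<bar> \<le> \<eta>" for i using pmf_dist_le_d_loc loc by (rule order_trans)
  show "0 \<le> infsum (pmf Y) {M..}" by (intro infsum_nonneg) simp
qed (use \<eta> tail tv in auto)

(* The window {1..<M} has M - 1 points, so the locale bound has argument M eta3 / delta - 1;
   replacing delta by its bounds eta2 and eta1 gives the claim. *)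
theorem theorem5:
  fixes X Y :: "nat pmf" and m M :: nat and \<eta>1 \<eta>2 \<eta>3 \<eta>4 :: real
  assumes X_vals: "set_pmf X \<subseteq> {1..m}"
    and Y_vals: "set_pmf Y \<subseteq> {1..}"
    and eta_pos: "0 < \<eta>3" "\<eta>3 \<le> \<eta>2" "\<eta>2 \<le> \<eta>1" "\<eta>1 < 1"
    and tv: "\<eta>2 \<le> d_TV X Y" "d_TV X Y \<le> \<eta>1"
    and loc: "d_loc X Y \<le> \<eta>3"
    and tail: "(\<Sum>\<^sub>\<infinity>i\<in>{M..}. pmf Y i) \<le> \<eta>3"
    and M_ge: "M \<ge> m + 1" "real M \<ge> \<eta>2 / ((1 - \<eta>1) * \<eta>3)"
    and eta4_pos: "0 < \<eta>4"
    and tail_ent_summable: "(\<lambda>i. - pmf Y i * ln (pmf Y i)) summable_on {M..}"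
    and tail_ent: "(\<Sum>\<^sub>\<infinity>i\<in>{M..}. - pmf Y i * ln (pmf Y i)) \<le> \<eta>4"
  shows "\<bar>shannon_entropy X - shannon_entropy Y\<bar>
           \<le> \<eta>1 * ln (real M * \<eta>3 / \<eta>2 - 1) + bin_entropy \<eta>1 + \<eta>4"
proof -
  define \<delta> T E where "\<delta> = d_TV X Y" and "T = infsum (pmf Y) {M..}"
    and "E = infsum (\<lambda>i. ent (pmf Y i)) {M..}"
  define K where "K = real M * \<eta>3 / \<eta>2 - 1"
  have X_F: "set_pmf X \<subseteq> {1..<M}" using X_vals M_ge(1) by auto
  have \<delta>: "0 < \<delta>" "\<eta>2 \<le> \<delta>" "\<delta> \<le> \<eta>1" using eta_pos tv by (auto simp: \<delta>_def)
  interpret trunc: truncated_pmf_pair "{1..<M}" "pmf X" "pmf Y" T \<delta> \<eta>3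
    unfolding \<delta>_def T_def using eta_pos tv loc tail
    by (intro truncated_pmf_pair_instance[OF X_F Y_vals]) auto
  have HX: "shannon_entropy X = (\<Sum>i\<in>{1..<M}. ent (pmf X i))"
    using X_F by (intro shannon_entropy_finite_support) auto
  have HY: "shannon_entropy Y = (\<Sum>i\<in>{1..<M}. ent (pmf Y i)) + E"
    using infsum_nat_split[of "\<lambda>i. ent (pmf Y i)" M] tail_ent_summable Y_vals
    by (auto simp: shannon_entropy_def ent_def E_def set_pmf_eq)
  have X_tail: "pmf X i = 0" if "i \<in> {M..}" for i
    using X_F that by (auto simp: set_pmf_eq)
  have E_bounds: "- T * ln \<eta>3 \<le> E" "E \<le> \<eta>4"
    using tail_entropy_ge[where A="{M..}", OF X_tail loc eta_pos(1)] tail_ent_summable tail_ent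
    by (simp_all add: T_def E_def ent_def)
  have "trunc.ratio_bound = real M * \<eta>3 / \<delta> - 1"
    unfolding trunc.ratio_bound_def using M_ge(1) by simp
  also have "\<dots> \<le> K"
    unfolding K_def using \<delta> eta_pos by (intro diff_right_mono divide_left_mono) auto
  finally have "\<delta> * ln trunc.ratio_bound + bin_entropy \<delta> \<le> \<eta>1 * ln K + bin_entropy \<eta>1"
    using trunc.entropy_diff_bounds(1) \<delta> eta_pos M_ge(2)
    by (intro entropy_bound_mono) (auto simp: K_def field_simps)
  thus ?thesis
    using trunc.entropy_diff_bounds(2) trunc.entropy_diff_bounds(3)[OF E_bounds(1)]
      HX HY E_bounds(2) eta4_pos
    unfolding K_def by linarith
qed

end
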